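(* (a) Let $n\in\mathbb{N}$, $\eta_1,\dots,\eta_{n+1}\in\mathbb{R}^d$ with $\eta_{n+1}=0$ and $\lvert(\nabla_+\eta)_k\rvert=1$ for $1\le k\le n$, and let $G_{kj}$ be the discrete Green function built from $\alpha_k=\langle(\nabla_+\eta)_{k+1},(\nabla_+\eta)_k\rangle$ as below. Suppose that for some $\upsilon\in(0,\frac{2\sqrt n}{5}]$ we have $\frac{k^{3/2}}{n^{3/2}}\lvert(\nabla_+^2\eta)_k\rvert^2\le\upsilon$ for all $1\le k\le n-1$. Then $\frac{n^2G_{kj}}{jk}\ge e^{-2\upsilon}$ for all $1\le j,k\le n$. (b) If $\eta_{ss}$ is smooth and $G$ solves $G_{ss}(s,x)-\lvert\eta_{ss}(s)\rvert^2G(s,x)=-\delta(s-x)$, $G(0,x)=0$, $G_s(1,x)=0$, then $\inf_{0<s,x\le1}\frac{G(s,x)}{sx}\ge\frac{e^{-\varrho}}{1+\varrho}$, where $\varrho=\int_0^1s\lvert\eta_{ss}(s)\rvert^2\,ds$.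
   Context: $(\nabla_+f)_k=n(f_{k+1}-f_k)$. Discrete Green function: $G_{kj}=\frac1n\sum_{i=1}^{\min\{j,k\}}\frac{p_{ij}p_{ik}}{\beta_i}$, $p_{ij}=\prod_{m=i}^{j-1}\frac{\alpha_m}{\beta_{m+1}}$ (empty product $=1$), $\beta_n=1$, $\beta_i=2-\alpha_i^2/\beta_{i+1}$ for $1\le i\le n-1$; it gives the solution $\sigma_k=\frac1n\sum_jG_{kj}\lvert(\nabla_+\dot\eta)_j\rvert^2$ of the chain tension equations. *)

theory Defs
  imports "HOL-Analysis.Analysis"
begin

definition grad_plus :: "nat \<Rightarrow> (nat \<Rightarrow> 'a::real_vector) \<Rightarrow> nat \<Rightarrow> 'a" where
  "grad_plus n f k = real n *\<^sub>R (f (Suc k) - f k)"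

definition alpha_seq :: "nat \<Rightarrow> (nat \<Rightarrow> 'a::real_inner) \<Rightarrow> nat \<Rightarrow> real" where
  "alpha_seq n \<eta> k = inner (grad_plus n \<eta> (Suc k)) (grad_plus n \<eta> k)"

text \<open>Backward recursion beta_n = 1, beta_i = 2 - alpha_i^2 / beta_(i+1), indexed by m = n - i.\<close>
fun beta_aux :: "(nat \<Rightarrow> real) \<Rightarrow> nat \<Rightarrow> nat \<Rightarrow> real" where
  "beta_aux \<alpha> n 0 = 1"
| "beta_aux \<alpha> n (Suc m) = 2 - (\<alpha> (n - Suc m))\<^sup>2 / beta_aux \<alpha> n m"

definition beta_seq :: "(nat \<Rightarrow> real) \<Rightarrow> nat \<Rightarrow> nat \<Rightarrow> real" where
  "beta_seq \<alpha> n i = beta_aux \<alpha> n (n - i)"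

definition p_coef :: "(nat \<Rightarrow> real) \<Rightarrow> nat \<Rightarrow> nat \<Rightarrow> nat \<Rightarrow> real" where
  "p_coef \<alpha> n i j = (\<Prod>m\<in>{i..<j}. \<alpha> m / beta_seq \<alpha> n (Suc m))"

definition disc_green :: "(nat \<Rightarrow> real) \<Rightarrow> nat \<Rightarrow> nat \<Rightarrow> nat \<Rightarrow> real" where
  "disc_green \<alpha> n k j =
     (1 / real n) * (\<Sum>i\<in>{1..min j k}. p_coef \<alpha> n i j * p_coef \<alpha> n i k / beta_seq \<alpha> n i)"

definition smooth_on_set :: "real set \<Rightarrow> (real \<Rightarrow> 'a::real_normed_vector) \<Rightarrow> bool" where
  "smooth_on_set S f \<longleftrightarrow> (\<exists>D. D 0 = f \<and>
      (\<forall>k. \<forall>s\<in>S. (D k has_vector_derivative D (Suc k) s) (at s within S)))"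

text \<open>G solves G_ss(s,x) - q(s) G(s,x) = - delta(s - x) on [0,1], G(0,x) = 0, G_s(1,x) = 0,
  for every x in (0,1]: classical piecewise meaning (ODE on [0,x] and [x,1],
  continuity at x, jump of G_s at x equal to -1; for x = 1 the right piece degenerates,
  so the Neumann condition with the jump gives G_s(1-,1) = 1).\<close>
definition cont_green :: "(real \<Rightarrow> real) \<Rightarrow> (real \<Rightarrow> real \<Rightarrow> real) \<Rightarrow> bool" where
  "cont_green q G \<longleftrightarrow> (\<forall>x\<in>{0<..1}.
      continuous_on {0..1} (\<lambda>s. G s x) \<and> G 0 x = 0 \<and>
      (\<exists>g1 g2.
         (\<forall>s\<in>{0..x}. ((\<lambda>t. G t x) has_real_derivative g1 s) (at s within {0..x}) \<and>
                      (g1 has_real_derivative q s * G s x) (at s within {0..x})) \<and>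
         (\<forall>s\<in>{x..1}. ((\<lambda>t. G t x) has_real_derivative g2 s) (at s within {x..1}) \<and>
                      (g2 has_real_derivative q s * G s x) (at s within {x..1})) \<and>
         g2 1 = 0 \<and> g1 x - g2 x = 1))"

end

theory Submission
  imports Defs
begin

(* For k <= j the Green function factorises as G_kj = p_kj G_kk, so it suffices
   to bound a_k = n G_kk / p_1k from below.  This ratio satisfies the three-term relation
   alpha_k a_{k+1} = 2 a_k - alpha_{k-1} a_{k-1}, a discrete convexity statement when 0 < alpha <= 1,
   whence a_k >= k / beta_1 and n^2 G_kj / (jk) >= p_1n / beta_1 = prod alpha_m / prod beta_i.
   The recursion for beta gives beta_i <= 1 + sum_{m>=i} (1 - alpha_m^2), so the right-hand side is at
   least exp(-sum (2m+1)(1 - alpha_m)).  For unit tangents 1 - alpha_m = |nabla^2 eta_m|^2 / (2 n^2),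
   and the curvature hypothesis together with sum (2m+1) m^(-3/2) <= 4 sqrt n (a telescoping estimate)
   bounds that sum by 2 v.

   For a column y = G(., x) and q >= 0, energy arguments ((y y')' >= 0) show that
   y is nonnegative and lies below its chords; integrating y'' = q y on [x,1] and a Gronwall argument
   on [0,x] give y'(0) >= e^(-rho) / (1 + rho), hence G(s,x) >= s x e^(-rho) / (1 + rho) for s <= x.
   The case s > x follows from the symmetry of G, proved with Wronskians. *)

lemma beta_seq_last: "beta_seq \<alpha> n n = 1"
  by (simp add: beta_seq_def)

lemma beta_seq_rec:
  assumes "i < n"
  shows "beta_seq \<alpha> n i = 2 - (\<alpha> i)\<^sup>2 / beta_seq \<alpha> n (Suc i)"
proof -
  have "n - i = Suc (n - Suc i)" and "n - Suc (n - Suc i) = i" using assms by auto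
  then show ?thesis unfolding beta_seq_def by simp
qed

lemma beta_step_bounds:
  fixes b a :: real
  assumes "1 \<le> b" "a\<^sup>2 \<le> 1"
  shows "1 \<le> 2 - a\<^sup>2 / b" and "2 - a\<^sup>2 / b \<le> b + (1 - a\<^sup>2)"
proof -
  have "a\<^sup>2 / b \<le> 1" using assms by (simp add: divide_le_eq)
  then show "1 \<le> 2 - a\<^sup>2 / b" by simp
  have "a\<^sup>2 * (1 - 1/b) \<le> b * (1 - 1/b)"
    using assms by (intro mult_right_mono) (auto simp: divide_le_eq)
  moreover have "b * (1 - 1/b) = b - 1" using assms by (simp add: algebra_simps)
  ultimately show "2 - a\<^sup>2 / b \<le> b + (1 - a\<^sup>2)" by (simp add: algebra_simps)
qed

lemma beta_seq_bounds:
  assumes "i \<le> n" and "\<And>m. m \<in> {i..<n} \<Longrightarrow> (\<alpha> m)\<^sup>2 \<le> 1"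
  shows "1 \<le> beta_seq \<alpha> n i \<and> beta_seq \<alpha> n i \<le> 1 + (\<Sum>m\<in>{i..<n}. 1 - (\<alpha> m)\<^sup>2)"
  using assms
proof (induction i rule: inc_induct)
  case base
  then show ?case by (simp add: beta_seq_last)
next
  case (step i)
  have IH: "1 \<le> beta_seq \<alpha> n (Suc i)"
    "beta_seq \<alpha> n (Suc i) \<le> 1 + (\<Sum>m\<in>{Suc i..<n}. 1 - (\<alpha> m)\<^sup>2)"
    using step by auto
  have a: "(\<alpha> i)\<^sup>2 \<le> 1" using step by simp
  have "(\<Sum>m\<in>{i..<n}. 1 - (\<alpha> m)\<^sup>2) = (1 - (\<alpha> i)\<^sup>2) + (\<Sum>m\<in>{Suc i..<n}. 1 - (\<alpha> m)\<^sup>2)"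
    using step.hyps by (simp add: sum.atLeast_Suc_lessThan)
  then show ?case
    using beta_seq_rec[OF step.hyps(2)] beta_step_bounds[OF IH(1) a] IH(2) by simp
qed

lemma p_coef_split: "i \<le> k \<Longrightarrow> k \<le> j \<Longrightarrow> p_coef \<alpha> n i j = p_coef \<alpha> n i k * p_coef \<alpha> n k j"
  unfolding p_coef_def by (simp add: prod.atLeastLessThan_concat)

lemma p_coef_Suc:
  "i \<le> k \<Longrightarrow> p_coef \<alpha> n i (Suc k) = p_coef \<alpha> n i k * (\<alpha> k / beta_seq \<alpha> n (Suc k))"
  unfolding p_coef_def by (simp add: prod.atLeastLessThan_Suc)

(* n G_kk (the diagonal of the Green function) and its ratio a_k = n G_kk / p_1k.
  Off the diagonal G_kj is p_kj G_kk, so everything reduces to a lower bound for a_k. *)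
definition green_diag :: "(nat \<Rightarrow> real) \<Rightarrow> nat \<Rightarrow> nat \<Rightarrow> real" where
  "green_diag \<alpha> n k = (\<Sum>i\<in>{1..k}. (p_coef \<alpha> n i k)\<^sup>2 / beta_seq \<alpha> n i)"

definition green_ratio :: "(nat \<Rightarrow> real) \<Rightarrow> nat \<Rightarrow> nat \<Rightarrow> real" where
  "green_ratio \<alpha> n k = green_diag \<alpha> n k / p_coef \<alpha> n 1 k"

lemma disc_green_sym: "disc_green \<alpha> n k j = disc_green \<alpha> n j k"
  unfolding disc_green_def by (simp add: min.commute mult.commute)

lemma disc_green_factor:
  assumes "k \<le> j"
  shows "disc_green \<alpha> n k j = p_coef \<alpha> n k j * green_diag \<alpha> n k / real n"
proof -
  have "(\<Sum>i\<in>{1..min j k}. p_coef \<alpha> n i j * p_coef \<alpha> n i k / beta_seq \<alpha> n i)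
      = (\<Sum>i\<in>{1..k}. p_coef \<alpha> n k j * ((p_coef \<alpha> n i k)\<^sup>2 / beta_seq \<alpha> n i))"
  proof (intro sum.cong)
    fix i assume "i \<in> {1..k}"
    then have "p_coef \<alpha> n i j = p_coef \<alpha> n i k * p_coef \<alpha> n k j"
      using assms by (intro p_coef_split) auto
    then show "p_coef \<alpha> n i j * p_coef \<alpha> n i k / beta_seq \<alpha> n i
        = p_coef \<alpha> n k j * ((p_coef \<alpha> n i k)\<^sup>2 / beta_seq \<alpha> n i)"
      by (simp add: power2_eq_square)
  qed (use assms in auto)
  also have "\<dots> = p_coef \<alpha> n k j * green_diag \<alpha> n k"
    by (simp add: green_diag_def sum_distrib_left)
  finally show ?thesis unfolding disc_green_def by simp
qed

lemma green_diag_Suc: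
  "green_diag \<alpha> n (Suc k)
     = (\<alpha> k / beta_seq \<alpha> n (Suc k))\<^sup>2 * green_diag \<alpha> n k + 1 / beta_seq \<alpha> n (Suc k)"
proof -
  have "green_diag \<alpha> n (Suc k) = (\<Sum>i\<in>{1..k}. (p_coef \<alpha> n i (Suc k))\<^sup>2 / beta_seq \<alpha> n i)
          + 1 / beta_seq \<alpha> n (Suc k)"
    unfolding green_diag_def by (simp add: p_coef_def)
  also have "(\<Sum>i\<in>{1..k}. (p_coef \<alpha> n i (Suc k))\<^sup>2 / beta_seq \<alpha> n i)
      = (\<alpha> k / beta_seq \<alpha> n (Suc k))\<^sup>2 * green_diag \<alpha> n k"
    unfolding green_diag_def sum_distrib_left
    by (intro sum.cong) (auto simp: p_coef_Suc power2_eq_square)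
  finally show ?thesis .
qed

lemma green_ratio_0: "green_ratio \<alpha> n 0 = 0"
  by (simp add: green_ratio_def green_diag_def)

lemma green_ratio_1: "green_ratio \<alpha> n 1 = 1 / beta_seq \<alpha> n 1"
  by (simp add: green_ratio_def green_diag_def p_coef_def)

context
  fixes \<alpha> :: "nat \<Rightarrow> real" and n :: nat
  assumes alpha_range: "\<And>m. m \<in> {1..<n} \<Longrightarrow> 0 < \<alpha> m \<and> \<alpha> m \<le> 1"
begin

lemma alpha_sq_le_1: "m \<in> {1..<n} \<Longrightarrow> (\<alpha> m)\<^sup>2 \<le> 1"
  using alpha_range by (intro power_le_one) (auto simp: less_imp_le)

lemma beta_ge_1: "i \<in> {1..n} \<Longrightarrow> 1 \<le> beta_seq \<alpha> n i"
  using beta_seq_bounds[of i n \<alpha>] alpha_sq_le_1 by auto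

lemma p_coef_range: "1 \<le> i \<Longrightarrow> j \<le> n \<Longrightarrow> 0 < p_coef \<alpha> n i j \<and> p_coef \<alpha> n i j \<le> 1"
proof -
  assume ij: "1 \<le> i" "j \<le> n"
  have q: "0 < \<alpha> m / beta_seq \<alpha> n (Suc m) \<and> \<alpha> m / beta_seq \<alpha> n (Suc m) \<le> 1"
    if "m \<in> {i..<j}" for m
  proof -
    have "1 \<le> beta_seq \<alpha> n (Suc m)" and "0 < \<alpha> m" and "\<alpha> m \<le> 1"
      using that ij beta_ge_1 alpha_range by auto
    then show ?thesis by (simp add: divide_le_eq)
  qed
  have "0 < p_coef \<alpha> n i j" unfolding p_coef_def using q by (intro prod_pos) blast
  moreover have "p_coef \<alpha> n i j \<le> 1"
    unfolding p_coef_def using q by (intro prod_le_1) (simp add: less_imp_le)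
  ultimately show ?thesis by simp
qed

abbreviation (input) \<beta> :: "nat \<Rightarrow> real" where "\<beta> i \<equiv> beta_seq \<alpha> n i"
abbreviation (input) P :: "nat \<Rightarrow> nat \<Rightarrow> real" where "P i j \<equiv> p_coef \<alpha> n i j"
abbreviation (input) R :: "nat \<Rightarrow> real" where "R k \<equiv> green_ratio \<alpha> n k"

lemma green_ratio_Suc:
  assumes k: "1 \<le> k" "k < n"
  shows "R (Suc k) = \<alpha> k / \<beta> (Suc k) * R k + 1 / (\<alpha> k * P 1 k)"
proof -
  have "0 < P 1 k" "1 \<le> \<beta> (Suc k)" "0 < \<alpha> k"
    using p_coef_range beta_ge_1 alpha_range k by auto
  then show ?thesis
    unfolding green_ratio_def green_diag_Suc p_coef_Suc[OF k(1)]
    by (simp add: field_simps power2_eq_square)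
qed

(* Eliminating p_1k gives the discrete equation alpha_k a_{k+1} = 2 a_k - alpha_{k-1} a_{k-1}
  (with a_0 = 0), which is a discrete convexity statement since alpha <= 1. *)
lemma green_ratio_three_term:
  assumes k: "1 \<le> k" "k < n"
  shows "\<alpha> k * R (Suc k) = 2 * R k - \<alpha> (k - 1) * R (k - 1)"
proof (cases "k = 1")
  case True
  have "1 \<le> \<beta> 1" "1 \<le> \<beta> 2" "0 < \<alpha> 1" using beta_ge_1 alpha_range k by auto
  moreover have "R 2 = \<alpha> 1 / \<beta> 2 * R 1 + 1 / \<alpha> 1"
    using green_ratio_Suc[of 1] k True by (simp add: numeral_2_eq_2 p_coef_def)
  moreover have "\<beta> 1 = 2 - (\<alpha> 1)\<^sup>2 / \<beta> 2"
    using beta_seq_rec[of 1 n \<alpha>] k True by (simp add: numeral_2_eq_2)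
  ultimately show ?thesis
    using True green_ratio_0 green_ratio_1 by (simp add: field_simps power2_eq_square numeral_2_eq_2)
next
  case False
  define K where "K = k - 1"
  have K: "k = Suc K" "1 \<le> K" "K < n" using k False K_def by auto
  have pos: "0 < P 1 K" "1 \<le> \<beta> k" "0 < \<alpha> K" "0 < \<alpha> k"
    using p_coef_range beta_ge_1 alpha_range k K by auto
  have rec_k: "R k = \<alpha> K / \<beta> k * R K + 1 / (\<alpha> K * P 1 K)"
    using green_ratio_Suc[OF K(2,3)] K(1) by simp
  have p_k: "P 1 k = P 1 K * (\<alpha> K / \<beta> k)"
    using p_coef_Suc[OF K(2)] K(1) by simp
  have "1 / P 1 k = \<beta> k * (1 / (\<alpha> K * P 1 K))"
    unfolding p_k using pos by (simp add: field_simps)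
  also have "\<dots> = \<beta> k * R k - \<alpha> K * R K"
    unfolding rec_k using pos by (simp add: field_simps)
  finally have inv_p: "1 / P 1 k = \<beta> k * R k - \<alpha> K * R K" .
  have "\<alpha> k * R (Suc k) = (\<alpha> k)\<^sup>2 / \<beta> (Suc k) * R k + 1 / P 1 k"
    unfolding green_ratio_Suc[OF k] using pos by (simp add: field_simps power2_eq_square)
  also have "\<dots> = ((\<alpha> k)\<^sup>2 / \<beta> (Suc k) + \<beta> k) * R k - \<alpha> K * R K"
    unfolding inv_p by (simp add: algebra_simps)
  also have "(\<alpha> k)\<^sup>2 / \<beta> (Suc k) + \<beta> k = 2"
    using beta_seq_rec[OF k(2)] by simp
  finally show ?thesis unfolding K_def by simp
qed

(* Discrete convexity: the increments of a_k are at least a_1, hence a_k >= k a_1 = k / beta_1. *)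
lemma green_ratio_superlinear:
  assumes "1 \<le> k" "k \<le> n"
  shows "0 \<le> R (k - 1) \<and> R (k - 1) + R 1 \<le> R k \<and> real k * R 1 \<le> R k"
  using assms
proof (induction k)
  case 0
  then show ?case by simp
next
  case (Suc k)
  have R1: "0 < R 1" using green_ratio_1 beta_ge_1[of 1] Suc.prems by simp
  show ?case
  proof (cases "k = 0")
    case True
    then show ?thesis using green_ratio_0 R1 by simp
  next
    case False
    then have k: "1 \<le> k" "k < n" using Suc.prems by auto
    have IH: "0 \<le> R (k - 1)" "R (k - 1) + R 1 \<le> R k" "real k * R 1 \<le> R k"
      using Suc.IH k by auto
    have a: "0 < \<alpha> k" "\<alpha> k \<le> 1" using alpha_range k by auto
    have "\<alpha> (k - 1) * R (k - 1) \<le> R (k - 1)"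
    proof (cases "k = 1")
      case False
      then have "k - 1 \<in> {1..<n}" using k by auto
      then have "0 < \<alpha> (k - 1)" "\<alpha> (k - 1) \<le> 1" using alpha_range by auto
      then show ?thesis using IH(1) by (intro mult_left_le_one_le) auto
    qed (simp add: green_ratio_0)
    then have step: "R k + R 1 \<le> \<alpha> k * R (Suc k)"
      using green_ratio_three_term[OF k] IH(2) by simp
    have Rk: "0 \<le> R k" using IH(1,2) R1 by linarith
    have "0 < R (Suc k)"
    proof (rule ccontr)
      assume "\<not> 0 < R (Suc k)"
      then have "\<alpha> k * R (Suc k) \<le> 0" using a by (simp add: mult_nonneg_nonpos)
      then show False using step Rk R1 by simp
    qed
    then have "\<alpha> k * R (Suc k) \<le> R (Suc k)" using a by (simp add: mult_left_le_one_le)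
    then show ?thesis using step IH Rk by (simp add: algebra_simps)
  qed
qed

lemma green_lower_ordered:
  assumes k: "1 \<le> k" "k \<le> j" "j \<le> n"
  shows "P 1 n / \<beta> 1 \<le> (real n)\<^sup>2 * disc_green \<alpha> n k j / (real j * real k)"
proof -
  have b1: "1 \<le> \<beta> 1" using beta_ge_1 k by simp
  have pos: "0 < P 1 k" "0 < P k j" "0 < P j n" "P j n \<le> 1" using p_coef_range k by auto
  have "real k / \<beta> 1 \<le> R k"
    using green_ratio_superlinear[of k] green_ratio_1 k by simp
  then have diag: "real k * P 1 k / \<beta> 1 \<le> green_diag \<alpha> n k"
    using pos unfolding green_ratio_def by (simp add: field_simps)
  have "P 1 n = P j n * (P k j * P 1 k)"
    using k p_coef_split[of 1 k j] p_coef_split[of 1 j n] by simp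
  then have "P 1 n \<le> P k j * P 1 k" using pos by (simp add: mult_left_le_one_le)
  then have "real k * P 1 n / \<beta> 1 \<le> real k * (P k j * P 1 k) / \<beta> 1"
    using b1 by (intro divide_right_mono mult_left_mono) auto
  also have "\<dots> = P k j * (real k * P 1 k / \<beta> 1)" by simp
  also have "\<dots> \<le> P k j * green_diag \<alpha> n k"
    using diag pos by (intro mult_left_mono) auto
  finally have num: "real k * P 1 n / \<beta> 1 \<le> P k j * green_diag \<alpha> n k" .
  have "P 1 n / \<beta> 1 \<le> P k j * green_diag \<alpha> n k / real k"
    using num k by (simp add: field_simps)
  also have "\<dots> \<le> real n / real j * (P k j * green_diag \<alpha> n k / real k)"
  proof -
    have "0 < P 1 n" using p_coef_range[of 1 n] k by simp
    then have "0 \<le> real k * P 1 n / \<beta> 1" using b1 by simp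
    then have "0 \<le> P k j * green_diag \<alpha> n k" using num by linarith
    then have "0 \<le> P k j * green_diag \<alpha> n k / real k" by simp
    moreover have "1 \<le> real n / real j" using k by simp
    ultimately show ?thesis by (metis mult_1 mult_right_mono)
  qed
  also have "\<dots> = (real n)\<^sup>2 * disc_green \<alpha> n k j / (real j * real k)"
    unfolding disc_green_factor[OF k(2)] using k by (simp add: field_simps power2_eq_square)
  finally show ?thesis .
qed

lemma green_lower_by_p_coef:
  assumes "j \<in> {1..n}" "k \<in> {1..n}"
  shows "P 1 n / \<beta> 1 \<le> (real n)\<^sup>2 * disc_green \<alpha> n k j / (real j * real k)"
proof (cases "k \<le> j")
  case True
  then show ?thesis using green_lower_ordered assms by auto
next
  case False
  then show ?thesis
    using green_lower_ordered[of j k] assms disc_green_sym[of \<alpha> n k j] by (simp add: mult.commute)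
qed

end

lemma exp_neg_lower:
  fixes e :: real
  assumes "0 \<le> e" "e \<le> 1/5"
  shows "exp (- (e + e\<^sup>2)) \<le> 1 - e"
proof -
  have "(1 - e) * (1 + e)\<^sup>2 \<ge> 4/5 * 1"
    using assms by (intro mult_mono) (auto simp: one_le_power)
  then have "0 \<le> e\<^sup>2 * ((1 - e) * (1 + e)\<^sup>2 / 2 - e)" using assms by simp
  also have "\<dots> = (1 - e) * (1 + (e + e\<^sup>2) + (e + e\<^sup>2)\<^sup>2 / 2) - 1"
    by (simp add: algebra_simps power2_eq_square)
  finally have "1 \<le> (1 - e) * (1 + (e + e\<^sup>2) + (e + e\<^sup>2)\<^sup>2 / 2)" by simp
  also have "\<dots> \<le> (1 - e) * exp (e + e\<^sup>2)"
    using exp_lower_Taylor_quadratic[of "e + e\<^sup>2"] assms by (intro mult_left_mono) auto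
  finally have "1 / exp (e + e\<^sup>2) \<le> 1 - e" by (simp add: divide_le_eq mult.commute)
  then show ?thesis by (metis exp_minus inverse_eq_divide)
qed

lemma sum_triangle_swap:
  fixes f :: "nat \<Rightarrow> real"
  shows "(\<Sum>i\<in>{1..n}. \<Sum>m\<in>{i..<n}. f m) = (\<Sum>m\<in>{1..<n}. real m * f m)"
proof (induction n)
  case 0
  then show ?case by simp
next
  case (Suc n)
  have "(\<Sum>i\<in>{1..Suc n}. \<Sum>m\<in>{i..<Suc n}. f m) = (\<Sum>i\<in>{1..n}. \<Sum>m\<in>{i..<Suc n}. f m)"
    by simp
  also have "\<dots> = (\<Sum>i\<in>{1..n}. (\<Sum>m\<in>{i..<n}. f m) + f n)"
    by (intro sum.cong) auto
  also have "\<dots> = (\<Sum>m\<in>{1..<n}. real m * f m) + real n * f n"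
    using Suc.IH by (simp add: sum.distrib)
  also have "\<dots> = (\<Sum>m\<in>{1..<Suc n}. real m * f m)"
    by (cases n) auto
  finally show ?case .
qed

(* Using 1 + t <= e^t on each factor, the product of all beta_i is at most exp(sum m (1 - alpha_m^2)). *)
lemma beta_prod_upper:
  assumes "\<And>m. m \<in> {1..<n} \<Longrightarrow> (\<alpha> m)\<^sup>2 \<le> 1"
  shows "(\<Prod>i\<in>{1..n}. beta_seq \<alpha> n i) \<le> exp (\<Sum>m\<in>{1..<n}. real m * (1 - (\<alpha> m)\<^sup>2))"
proof -
  have "0 \<le> beta_seq \<alpha> n i \<and> beta_seq \<alpha> n i \<le> exp (\<Sum>m\<in>{i..<n}. 1 - (\<alpha> m)\<^sup>2)"
    if "i \<in> {1..n}" for i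
  proof -
    have "1 \<le> beta_seq \<alpha> n i \<and> beta_seq \<alpha> n i \<le> 1 + (\<Sum>m\<in>{i..<n}. 1 - (\<alpha> m)\<^sup>2)"
      using beta_seq_bounds[of i n \<alpha>] assms that by auto
    then show ?thesis using exp_ge_add_one_self[of "\<Sum>m\<in>{i..<n}. 1 - (\<alpha> m)\<^sup>2"] by linarith
  qed
  then have "(\<Prod>i\<in>{1..n}. beta_seq \<alpha> n i) \<le> (\<Prod>i\<in>{1..n}. exp (\<Sum>m\<in>{i..<n}. 1 - (\<alpha> m)\<^sup>2))"
    by (intro prod_mono) blast
  also have "\<dots> = exp (\<Sum>i\<in>{1..n}. \<Sum>m\<in>{i..<n}. 1 - (\<alpha> m)\<^sup>2)"
    by (rule exp_sum[symmetric]) simp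
  also have "\<dots> = exp (\<Sum>m\<in>{1..<n}. real m * (1 - (\<alpha> m)\<^sup>2))"
    by (simp only: sum_triangle_swap)
  finally show ?thesis .
qed

lemma alpha_prod_lower:
  fixes \<alpha> :: "nat \<Rightarrow> real" and n :: nat
  assumes "\<And>m. m \<in> {1..<n} \<Longrightarrow> 4/5 \<le> \<alpha> m \<and> \<alpha> m \<le> 1"
  shows "exp (- (\<Sum>m\<in>{1..<n}. (1 - \<alpha> m) + (1 - \<alpha> m)\<^sup>2)) \<le> (\<Prod>m\<in>{1..<n}. \<alpha> m)"
proof -
  have "exp (- (\<Sum>m\<in>{1..<n}. (1 - \<alpha> m) + (1 - \<alpha> m)\<^sup>2))
      = exp (\<Sum>m\<in>{1..<n}. - ((1 - \<alpha> m) + (1 - \<alpha> m)\<^sup>2))"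
    by (simp only: sum_negf)
  also have "\<dots> = (\<Prod>m\<in>{1..<n}. exp (- ((1 - \<alpha> m) + (1 - \<alpha> m)\<^sup>2)))"
    by (subst exp_sum) auto
  also have "\<dots> \<le> (\<Prod>m\<in>{1..<n}. \<alpha> m)"
  proof (rule prod_mono)
    fix m assume "m \<in> {1..<n}"
    then have "exp (- ((1 - \<alpha> m) + (1 - \<alpha> m)\<^sup>2)) \<le> 1 - (1 - \<alpha> m)"
      using assms by (intro exp_neg_lower) auto
    then show "0 \<le> exp (- ((1 - \<alpha> m) + (1 - \<alpha> m)\<^sup>2)) \<and> exp (- ((1 - \<alpha> m) + (1 - \<alpha> m)\<^sup>2)) \<le> \<alpha> m"
      by simp
  qed
  finally show ?thesis .
qed

(* Since beta_n = 1, p_1n / beta_1 is the product of the alpha_m over the product of the beta_i. *)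
lemma p_coef_over_beta:
  assumes "1 \<le> n"
  shows "p_coef \<alpha> n 1 n / beta_seq \<alpha> n 1 = (\<Prod>m\<in>{1..<n}. \<alpha> m) / (\<Prod>i\<in>{1..n}. beta_seq \<alpha> n i)"
proof -
  have "(\<Prod>m\<in>{1..<n}. beta_seq \<alpha> n (Suc m)) = (\<Prod>i\<in>{Suc 1..<Suc n}. beta_seq \<alpha> n i)"
    by (rule prod.shift_bounds_Suc_ivl[symmetric])
  also have "{Suc 1..<Suc n} = {Suc 1..n}" by auto
  finally have "(\<Prod>i\<in>{1..n}. beta_seq \<alpha> n i) = beta_seq \<alpha> n 1 * (\<Prod>m\<in>{1..<n}. beta_seq \<alpha> n (Suc m))"
    using assms by (simp add: prod.atLeast_Suc_atMost)
  then show ?thesis unfolding p_coef_def prod_dividef by simp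
qed

lemma p_coef_over_beta_lower:
  fixes \<alpha> :: "nat \<Rightarrow> real" and n :: nat
  assumes n: "1 \<le> n" and alpha: "\<And>m. m \<in> {1..<n} \<Longrightarrow> 4/5 \<le> \<alpha> m \<and> \<alpha> m \<le> 1"
  shows "exp (- (\<Sum>m\<in>{1..<n}. (2 * real m + 1) * (1 - \<alpha> m))) \<le> p_coef \<alpha> n 1 n / beta_seq \<alpha> n 1"
proof -
  define S1 where "S1 = (\<Sum>m\<in>{1..<n}. (1 - \<alpha> m) + (1 - \<alpha> m)\<^sup>2)"
  define S2 where "S2 = (\<Sum>m\<in>{1..<n}. real m * (1 - (\<alpha> m)\<^sup>2))"
  have alpha_sq: "\<And>m. m \<in> {1..<n} \<Longrightarrow> (\<alpha> m)\<^sup>2 \<le> 1"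
    using alpha by (intro power_le_one) force+
  have "S1 + S2 \<le> (\<Sum>m\<in>{1..<n}. (2 * real m + 1) * (1 - \<alpha> m))"
    unfolding S1_def S2_def sum.distrib[symmetric]
  proof (rule sum_mono)
    fix m assume m: "m \<in> {1..<n}"
    have "(1 - \<alpha> m) + (1 - \<alpha> m)\<^sup>2 + real m * (1 - (\<alpha> m)\<^sup>2)
        = (2 * real m + 1) * (1 - \<alpha> m) - (real m - 1) * (1 - \<alpha> m)\<^sup>2"
      by (simp add: algebra_simps power2_eq_square)
    also have "\<dots> \<le> (2 * real m + 1) * (1 - \<alpha> m)" using m by simp
    finally show "(1 - \<alpha> m) + (1 - \<alpha> m)\<^sup>2 + real m * (1 - (\<alpha> m)\<^sup>2) \<le> (2 * real m + 1) * (1 - \<alpha> m)" .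
  qed
  then have "exp (- (\<Sum>m\<in>{1..<n}. (2 * real m + 1) * (1 - \<alpha> m))) \<le> exp (- S1) / exp S2"
    by (simp flip: exp_diff)
  also have "\<dots> \<le> (\<Prod>m\<in>{1..<n}. \<alpha> m) / exp S2"
    using alpha_prod_lower[OF alpha] unfolding S1_def by (simp add: divide_right_mono)
  also have "\<dots> \<le> (\<Prod>m\<in>{1..<n}. \<alpha> m) / (\<Prod>i\<in>{1..n}. beta_seq \<alpha> n i)"
  proof (rule divide_left_mono)
    show "(\<Prod>i\<in>{1..n}. beta_seq \<alpha> n i) \<le> exp S2"
      using beta_prod_upper[OF alpha_sq] unfolding S2_def .
    show "0 \<le> (\<Prod>m\<in>{1..<n}. \<alpha> m)" using alpha by (intro prod_nonneg) force
    have "0 < (\<Prod>i\<in>{1..n}. beta_seq \<alpha> n i)"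
      using beta_seq_bounds[of _ n \<alpha>] alpha_sq by (intro prod_pos) fastforce
    then show "0 < exp S2 * (\<Prod>i\<in>{1..n}. beta_seq \<alpha> n i)" by simp
  qed
  also have "\<dots> = p_coef \<alpha> n 1 n / beta_seq \<alpha> n 1"
    using p_coef_over_beta[OF n] by simp
  finally show ?thesis .
qed

(* A telescoping majorant for the weights (2m+1) / m^(3/2): the function 2 sqrt y - 1 / sqrt y. *)
definition sqrt_potential :: "real \<Rightarrow> real" where
  "sqrt_potential y = 2 * sqrt y - 1 / sqrt y"

lemma sqrt_potential_increment:
  fixes x :: real
  assumes x: "1 \<le> x"
  defines "a \<equiv> sqrt (x + 1/2)" and "b \<equiv> sqrt (x - 1/2)"
  shows "sqrt_potential (x + 1/2) - sqrt_potential (x - 1/2) = (2 * (a * b) + 1) / (a * b * (a + b))"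
proof -
  have a: "0 < a" "a\<^sup>2 = x + 1/2" and b: "0 < b" "b\<^sup>2 = x - 1/2"
    using x unfolding a_def b_def by auto
  have "(a - b) * (a + b) = 1" using a b by (simp add: algebra_simps power2_eq_square)
  then have ab: "a - b = 1 / (a + b)" using a b by (simp add: field_simps)
  have "sqrt_potential (x + 1/2) - sqrt_potential (x - 1/2) = (a - b) * (2 + 1 / (a * b))"
    unfolding sqrt_potential_def a_def[symmetric] b_def[symmetric] using a b by (simp add: field_simps)
  also have "\<dots> = (2 * (a * b) + 1) / (a * b * (a + b))"
    unfolding ab using a b by (simp add: field_simps)
  finally show ?thesis .
qed

(* The polynomial inequality behind the comparison of a weight with the increment of the potential;
  here p stands for sqrt(x^2 - 1/4). *)
lemma quintic_inequality:
  fixes x p :: real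
  assumes x: "1 \<le> x" and pp: "p\<^sup>2 = x\<^sup>2 - 1/4" and p0: "0 \<le> p" and px: "p \<le> x"
  shows "(2*x+1)\<^sup>2 * p\<^sup>2 * (2*x + 2*p) \<le> 4 * x^3 * (2*p+1)\<^sup>2"
proof -
  define P where "P = x\<^sup>2 - 1/4"
  define Q where "Q = -2*(2*x+1)\<^sup>2 * p + (16*x^3 - 2*x*(2*x+1)\<^sup>2)"
  define A where "A = 8*x^5 - 8*x^4 + 2*x^2 + x/2"
  define B where "B = -8*x^4 + 8*x^3 + 2*x + 1/2"
  have D: "4 * x^3 * (2*p+1)\<^sup>2 - (2*x+1)\<^sup>2 * p\<^sup>2 * (2*x + 2*p) = Q * (p\<^sup>2 - P) + (A + B * p)"
    unfolding Q_def P_def A_def B_def by (simp add: algebra_simps power2_eq_square power3_eq_cube eval_nat_numeral)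
  have z: "p\<^sup>2 - P = 0" using pp P_def by simp
  have "A + B * p \<ge> 0"
  proof (cases "B \<le> 0")
    case True
    have ax: "A + B * x = 4*x^2 + x" unfolding A_def B_def by (simp add: field_simps eval_nat_numeral)
    have "A + B * p = (A + B * x) - B * (x - p)" by (simp add: algebra_simps)
    then have "A + B * p = 4*x^2 + x - B * (x - p)" using ax by simp
    moreover have "B * (x - p) \<le> 0" using True px by (simp add: mult_nonpos_nonneg)
    moreover have "0 \<le> 4*x^2 + x" using x by simp
    ultimately show ?thesis by linarith
  next
    case False
    have "A = 8 * x^4 * (x - 1) + 2*x^2 + x/2" unfolding A_def by (simp add: algebra_simps eval_nat_numeral)
    moreover have "0 \<le> 8 * x^4 * (x - 1)" using x by simp
    moreover have "0 \<le> 2*x^2 + x/2" using x by simp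
    ultimately have "A \<ge> 0" by linarith
    moreover have "B * p \<ge> 0" using False p0 by simp
    ultimately show ?thesis by simp
  qed
  then show ?thesis using D z by simp
qed

lemma weight_le_potential_increment:
  fixes x :: real assumes x: "1 \<le> x"
  shows "(2*x+1) / (x * sqrt x) \<le> 2 * (sqrt_potential (x + 1/2) - sqrt_potential (x - 1/2))"
proof -
  define a where "a = sqrt (x + 1/2)"
  define b where "b = sqrt (x - 1/2)"
  define s where "s = sqrt x"
  have a2: "a\<^sup>2 = x + 1/2" and b2: "b\<^sup>2 = x - 1/2" and s2: "s\<^sup>2 = x"
    using x unfolding a_def b_def s_def by auto
  have "0 < x - 1/2" using x by simp
  then have bp: "0 < b" unfolding b_def by simp
  have ap: "0 < a" unfolding a_def using x by simp
  have sp: "0 < s" unfolding s_def using x by simp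
  define p where "p = a * b"
  have "p\<^sup>2 = a\<^sup>2 * b\<^sup>2" unfolding p_def by (simp add: power_mult_distrib)
  also have "\<dots> = (x + 1/2) * (x - 1/2)" using a2 b2 by simp
  also have "\<dots> = x\<^sup>2 - 1/4" by (simp add: algebra_simps power2_eq_square)
  finally have pp: "p\<^sup>2 = x\<^sup>2 - 1/4" .
  have p0: "0 < p" unfolding p_def using ap bp by simp
  have px: "p \<le> x"
  proof (rule power2_le_imp_le)
    show "p\<^sup>2 \<le> x\<^sup>2" using pp by simp
  qed (use x in simp)
  have G: "sqrt_potential (x + 1/2) - sqrt_potential (x - 1/2) = (2*p + 1) / (p * (a + b))"
    using sqrt_potential_increment[OF x] unfolding a_def b_def p_def by simp
  have ab2: "(a + b)\<^sup>2 = 2*x + 2*p" unfolding p_def using a2 b2 by (simp add: algebra_simps power2_eq_square)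
  have core: "(2*x+1)\<^sup>2 * p\<^sup>2 * (2*x + 2*p) \<le> 4 * x^3 * (2*p+1)\<^sup>2"
    using quintic_inequality[OF x pp] p0 px by simp
  have sq: "((2*x+1) * p * (a + b))\<^sup>2 \<le> (2 * x * s * (2*p+1))\<^sup>2"
  proof -
    have "((2*x+1) * p * (a + b))\<^sup>2 = (2*x+1)\<^sup>2 * p\<^sup>2 * (2*x + 2*p)"
      by (simp add: power_mult_distrib ab2)
    moreover have "(2 * x * s * (2*p+1))\<^sup>2 = 4 * x^3 * (2*p+1)\<^sup>2"
      using s2 by (simp add: power_mult_distrib eval_nat_numeral power2_eq_square)
    ultimately show ?thesis using core by simp
  qed
  have le: "(2*x+1) * p * (a + b) \<le> 2 * x * s * (2*p+1)"
    using power2_le_imp_le[OF sq] x sp p0 by simp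
  have den: "0 < x * s" "0 < p * (a + b)" using x sp p0 ap bp by simp_all
  have "(2*x+1) / (x * s) = ((2*x+1) * p * (a + b)) / (x * s * (p * (a + b)))"
    using p0 ap bp by simp
  also have "\<dots> \<le> (2 * x * s * (2*p+1)) / (x * s * (p * (a + b)))"
    using le den by (intro divide_right_mono) auto
  also have "\<dots> = 2 * ((2*p + 1) / (p * (a + b)))"
    using x sp by simp
  finally have "(2*x+1) / (x * s) \<le> 2 * ((2*p + 1) / (p * (a + b)))" .
  then show ?thesis unfolding G s_def .
qed

lemma weight_sum_le:
  "(\<Sum>m\<in>{1..N}. (2 * real m + 1) / (real m * sqrt (real m))) \<le> 2 * sqrt_potential (real N + 1/2)"
proof (induction N)
  case 0
  have "sqrt (1/2) * sqrt (1/2) = (1/2::real)" by simp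
  then show ?case unfolding sqrt_potential_def by (simp add: field_simps)
next
  case (Suc N)
  have "(2 * real (Suc N) + 1) / (real (Suc N) * sqrt (real (Suc N)))
        \<le> 2 * (sqrt_potential (real (Suc N) + 1/2) - sqrt_potential (real (Suc N) - 1/2))"
    by (rule weight_le_potential_increment) simp
  also have "real (Suc N) - 1/2 = real N + 1/2" by simp
  finally have step: "(2 * real (Suc N) + 1) / (real (Suc N) * sqrt (real (Suc N)))
        \<le> 2 * (sqrt_potential (real (Suc N) + 1/2) - sqrt_potential (real N + 1/2))" .
  have "(\<Sum>m\<in>{1..Suc N}. (2 * real m + 1) / (real m * sqrt (real m)))
      = (\<Sum>m\<in>{1..N}. (2 * real m + 1) / (real m * sqrt (real m)))
        + (2 * real (Suc N) + 1) / (real (Suc N) * sqrt (real (Suc N)))"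
    by simp
  also have "\<dots> \<le> 2 * sqrt_potential (real N + 1/2)
      + 2 * (sqrt_potential (real (Suc N) + 1/2) - sqrt_potential (real N + 1/2))"
    by (rule add_mono[OF Suc.IH step])
  finally show ?case by simp
qed

lemma weight_sum_le_sqrt:
  assumes "1 \<le> n"
  shows "(\<Sum>m\<in>{1..<n}. (2 * real m + 1) / (real m * sqrt (real m))) \<le> 4 * sqrt (real n)"
proof -
  have "{1..<n} = {1..n - 1}" using assms by auto
  then have "(\<Sum>m\<in>{1..<n}. (2 * real m + 1) / (real m * sqrt (real m)))
      \<le> 2 * sqrt_potential (real (n - 1) + 1/2)"
    using weight_sum_le by simp
  also have "\<dots> \<le> 4 * sqrt (real (n - 1) + 1/2)" unfolding sqrt_potential_def by simp
  also have "\<dots> \<le> 4 * sqrt (real n)" using assms by (simp add: of_nat_diff)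
  finally show ?thesis .
qed

lemma second_difference_norm_sq:
  fixes \<eta> :: "nat \<Rightarrow> 'a::real_inner"
  assumes "norm (grad_plus n \<eta> m) = 1" "norm (grad_plus n \<eta> (Suc m)) = 1"
  shows "(norm (grad_plus n (grad_plus n \<eta>) m))\<^sup>2 = (real n)\<^sup>2 * (2 * (1 - alpha_seq n \<eta> m))"
proof -
  let ?u = "grad_plus n \<eta> (Suc m)" and ?v = "grad_plus n \<eta> m"
  have "(norm (?u - ?v))\<^sup>2 = inner ?u ?u - 2 * inner ?u ?v + inner ?v ?v"
    unfolding power2_norm_eq_inner by (simp add: inner_diff_left inner_diff_right inner_commute)
  also have "\<dots> = 2 * (1 - inner ?u ?v)"
    using assms by (simp add: dot_square_norm)
  finally show ?thesis
    unfolding grad_plus_def[of n "grad_plus n \<eta>"] alpha_seq_def by (simp add: power_mult_distrib)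
qed

lemma powr_three_halves: "0 \<le> x \<Longrightarrow> (x::real) powr (3/2) = x * sqrt x"
  by (cases "x = 0") (simp_all add: powr_add[of x 1 "1/2", simplified] powr_half_sqrt)

lemma alpha_gap_bound:
  fixes \<eta> :: "nat \<Rightarrow> 'a::real_inner"
  assumes m: "1 \<le> m" "m < n"
    and unit: "norm (grad_plus n \<eta> m) = 1" "norm (grad_plus n \<eta> (Suc m)) = 1"
    and curv: "real m powr (3/2) / real n powr (3/2) * (norm (grad_plus n (grad_plus n \<eta>) m))\<^sup>2 \<le> \<upsilon>"
  shows "0 \<le> 1 - alpha_seq n \<eta> m \<and>
         1 - alpha_seq n \<eta> m \<le> \<upsilon> / (2 * sqrt (real n)) / (real m * sqrt (real m))"
proof -
  define e where "e = 1 - alpha_seq n \<eta> m"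
  have E: "(norm (grad_plus n (grad_plus n \<eta>) m))\<^sup>2 = (real n)\<^sup>2 * (2 * e)"
    unfolding e_def by (rule second_difference_norm_sq[OF unit])
  have sn: "0 < sqrt (real n)" and sm: "0 < sqrt (real m)" using m by auto
  have "0 \<le> (real n)\<^sup>2 * (2 * e)" using E[symmetric] by simp
  then have e0: "0 \<le> e" using m by (simp add: zero_le_mult_iff)
  have "real m powr (3/2) / real n powr (3/2) * ((real n)\<^sup>2 * (2 * e))
        = (real m * sqrt (real m)) / (real n * sqrt (real n)) * ((real n)\<^sup>2 * (2 * e))"
    by (simp add: powr_three_halves)
  also have "\<dots> = e * (2 * sqrt (real n) * (real m * sqrt (real m)))"
  proof -
    have nn: "real n = sqrt (real n) * sqrt (real n)" by simp
    show ?thesis using sn m by (subst (1 2) nn) (simp add: field_simps power2_eq_square)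
  qed
  finally have "e * (2 * sqrt (real n) * (real m * sqrt (real m))) \<le> \<upsilon>" using curv E by simp
  then have "e \<le> \<upsilon> / (2 * sqrt (real n)) / (real m * sqrt (real m))"
    using sn sm m by (simp add: field_simps)
  then show ?thesis using e0 unfolding e_def by simp
qed

theorem discrete_green_lower_bound:
  fixes \<eta> :: "nat \<Rightarrow> 'a::real_inner" and n j k :: nat and \<upsilon> :: real
  assumes unit: "\<forall>k\<in>{1..n}. norm (grad_plus n \<eta> k) = 1"
    and \<upsilon>: "0 \<le> \<upsilon>" "\<upsilon> \<le> 2 * sqrt (real n) / 5"
    and curv: "\<forall>k\<in>{1..n-1}. real k powr (3/2) / real n powr (3/2)
                 * (norm (grad_plus n (grad_plus n \<eta>) k))\<^sup>2 \<le> \<upsilon>"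
    and jk: "j \<in> {1..n}" "k \<in> {1..n}"
  shows "exp (- 2 * \<upsilon>) \<le> (real n)\<^sup>2 * disc_green (alpha_seq n \<eta>) n k j / (real j * real k)"
proof -
  define \<alpha> where "\<alpha> = alpha_seq n \<eta>"
  define c where "c = \<upsilon> / (2 * sqrt (real n))"
  have n: "1 \<le> n" using jk by simp
  have c: "0 \<le> c" "c \<le> 1/5" using \<upsilon> n unfolding c_def by (auto simp: field_simps)
  have gap: "0 \<le> 1 - \<alpha> m \<and> 1 - \<alpha> m \<le> c / (real m * sqrt (real m))" if "m \<in> {1..<n}" for m
    using alpha_gap_bound[of m n \<eta> \<upsilon>] unit curv that unfolding \<alpha>_def c_def by auto
  have range: "4/5 \<le> \<alpha> m \<and> \<alpha> m \<le> 1" if m: "m \<in> {1..<n}" for m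
  proof -
    have "1 \<le> real m" "1 \<le> sqrt (real m)" using m by auto
    then have "1 * 1 \<le> real m * sqrt (real m)" by (intro mult_mono) auto
    then have "c / (real m * sqrt (real m)) \<le> c" using c by (simp add: divide_le_eq mult_le_cancel_left1)
    then show ?thesis using gap[OF m] c by linarith
  qed
  have "(\<Sum>m\<in>{1..<n}. (2 * real m + 1) * (1 - \<alpha> m))
        \<le> (\<Sum>m\<in>{1..<n}. c * ((2 * real m + 1) / (real m * sqrt (real m))))"
  proof (rule sum_mono)
    fix m assume m: "m \<in> {1..<n}"
    have "(2 * real m + 1) * (1 - \<alpha> m) \<le> (2 * real m + 1) * (c / (real m * sqrt (real m)))"
      using gap[OF m] by (intro mult_left_mono) auto
    then show "(2 * real m + 1) * (1 - \<alpha> m) \<le> c * ((2 * real m + 1) / (real m * sqrt (real m)))"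
      by (simp add: field_simps)
  qed
  also have "\<dots> = c * (\<Sum>m\<in>{1..<n}. (2 * real m + 1) / (real m * sqrt (real m)))"
    by (simp add: sum_distrib_left)
  also have "\<dots> \<le> c * (4 * sqrt (real n))"
    using weight_sum_le_sqrt[OF n] c by (intro mult_left_mono) auto
  also have "\<dots> = 2 * \<upsilon>" using n unfolding c_def by simp
  finally have "exp (- 2 * \<upsilon>) \<le> exp (- (\<Sum>m\<in>{1..<n}. (2 * real m + 1) * (1 - \<alpha> m)))" by simp
  also have "\<dots> \<le> p_coef \<alpha> n 1 n / beta_seq \<alpha> n 1"
    using p_coef_over_beta_lower[OF n] range by blast
  also have "\<dots> \<le> (real n)\<^sup>2 * disc_green \<alpha> n k j / (real j * real k)"
    using green_lower_by_p_coef[of n \<alpha> j k] range jk by force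
  finally show ?thesis unfolding \<alpha>_def .
qed

definition sturm_solution ::
    "(real \<Rightarrow> real) \<Rightarrow> real set \<Rightarrow> (real \<Rightarrow> real) \<Rightarrow> (real \<Rightarrow> real) \<Rightarrow> bool" where
  "sturm_solution q S y y' \<longleftrightarrow>
     (\<forall>t\<in>S. (y has_real_derivative y' t) (at t within S) \<and>
            (y' has_real_derivative q t * y t) (at t within S))"

lemma sturm_solutionD:
  assumes "sturm_solution q S y y'" "t \<in> S"
  shows "(y has_real_derivative y' t) (at t within S)"
    and "(y' has_real_derivative q t * y t) (at t within S)"
  using assms unfolding sturm_solution_def by auto

lemma sturm_solution_subset:
  assumes "sturm_solution q S y y'" "T \<subseteq> S"
  shows "sturm_solution q T y y'"
  using assms unfolding sturm_solution_def by (auto intro: DERIV_subset)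

lemma nondecreasing_by_deriv:
  fixes f f' :: "real \<Rightarrow> real"
  assumes ab: "a \<le> b" "{a..b} \<subseteq> S"
    and deriv: "\<And>t. t \<in> S \<Longrightarrow> (f has_real_derivative f' t) (at t within S)"
    and nonneg: "\<And>t. t \<in> {a..b} \<Longrightarrow> 0 \<le> f' t"
  shows "f a \<le> f b"
proof -
  have "\<exists>t\<in>{a..b}. f b - f a = (\<lambda>h. f' t * h) (b - a)"
  proof (rule mvt_very_simple[OF ab(1)])
    fix t assume "a \<le> t" "t \<le> b"
    then have "t \<in> S" using ab(2) by auto
    then have "(f has_real_derivative f' t) (at t within {a..b})"
      using DERIV_subset[OF deriv ab(2)] by blast
    then show "(f has_derivative (\<lambda>h. f' t * h)) (at t within {a..b})"
      by (simp add: has_field_derivative_def)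
  qed
  then obtain t where t: "t \<in> {a..b}" "f b - f a = f' t * (b - a)" by auto
  have "0 \<le> f' t * (b - a)" using nonneg[OF t(1)] ab(1) by simp
  then show ?thesis using t(2) by simp
qed

lemma wronskian_const:
  assumes "a \<le> b" "sturm_solution q {a..b} y g" "sturm_solution q {a..b} z h"
  shows "g a * z a - y a * h a = g b * z b - y b * h b"
proof -
  have "((\<lambda>u. g u * z u - y u * h u) has_real_derivative 0) (at u within {a..b})"
    if "u \<in> {a..b}" for u
  proof -
    have "((\<lambda>u. g u * z u - y u * h u) has_real_derivative
        (q u * y u * z u + h u * g u) - (g u * h u + q u * z u * y u)) (at u within {a..b})"
      using assms(2,3) that by (intro DERIV_diff DERIV_mult) (auto dest: sturm_solutionD)
    then show ?thesis by (simp add: algebra_simps)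
  qed
  then obtain c where "\<forall>u\<in>{a..b}. g u * z u - y u * h u = c"
    using has_field_derivative_zero_constant[of "{a..b}" "\<lambda>u. g u * z u - y u * h u"] by auto
  then show ?thesis using assms(1) by auto
qed

(* A solution on [0,x] with q >= 0 and y(0) = 0: (y y')' = y'^2 + q y^2 >= 0, so y y' >= 0
  and y^2 increases. *)
context
  fixes q y g :: "real \<Rightarrow> real" and x :: real
  assumes sol: "sturm_solution q {0..x} y g"
    and q_nonneg: "\<And>t. t \<in> {0..x} \<Longrightarrow> 0 \<le> q t"
    and y0: "y 0 = 0"
begin

lemma left_energy_nonneg:
  assumes t: "t \<in> {0..x}"
  shows "0 \<le> y t * g t"
proof -
  have "y 0 * g 0 \<le> y t * g t"
  proof (rule nondecreasing_by_deriv[of 0 t "{0..x}"])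
    show "0 \<le> t" "{0..t} \<subseteq> {0..x}" using t by auto
    fix u assume "u \<in> {0..x}"
    then show "((\<lambda>u. y u * g u) has_real_derivative g u * g u + q u * y u * y u) (at u within {0..x})"
      using DERIV_mult[OF sturm_solutionD[OF sol]] by simp
  next
    fix u assume "u \<in> {0..t}"
    then show "0 \<le> g u * g u + q u * y u * y u" using q_nonneg t by (simp add: mult.assoc)
  qed
  then show ?thesis using y0 by simp
qed

lemma left_square_mono:
  assumes "0 \<le> a" "a \<le> b" "b \<le> x"
  shows "y a * y a \<le> y b * y b"
proof (rule nondecreasing_by_deriv[of a b "{0..x}"])
  show "a \<le> b" "{a..b} \<subseteq> {0..x}" using assms by auto
  fix u assume "u \<in> {0..x}"
  then show "((\<lambda>u. y u * y u) has_real_derivative g u * y u + g u * y u) (at u within {0..x})"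
    using DERIV_mult[OF sturm_solutionD(1)[OF sol] sturm_solutionD(1)[OF sol]] by simp
next
  fix u assume "u \<in> {a..b}"
  then show "0 \<le> g u * y u + g u * y u" using left_energy_nonneg[of u] assms by (simp add: mult.commute)
qed

(* If moreover y(x) >= 0, then y >= 0 on [0,x]: a sign change would contradict monotonicity of y^2. *)
lemma left_nonneg:
  assumes yx: "0 \<le> y x" and t: "t \<in> {0..x}"
  shows "0 \<le> y t"
proof (rule ccontr)
  assume neg: "\<not> 0 \<le> y t"
  have "continuous_on {0..x} y" using sturm_solutionD(1)[OF sol] by (rule DERIV_continuous_on)
  then have "continuous_on {t..x} y" by (rule continuous_on_subset) (use t in auto)
  then obtain z where z: "t \<le> z" "z \<le> x" "y z = 0"
    using IVT'[of y t 0 x] neg yx t by auto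
  have "y t * y t \<le> y z * y z" using left_square_mono[of t z] t z by auto
  then show False using neg z(3) by (simp add: mult_le_0_iff)
qed

lemma left_slope_mono:
  assumes nonneg: "\<And>t. t \<in> {0..x} \<Longrightarrow> 0 \<le> y t" and ab: "0 \<le> a" "a \<le> b" "b \<le> x"
  shows "g a \<le> g b"
proof (rule nondecreasing_by_deriv[of a b "{0..x}"])
  show "a \<le> b" "{a..b} \<subseteq> {0..x}" using ab by auto
  fix u assume "u \<in> {0..x}"
  then show "(g has_real_derivative q u * y u) (at u within {0..x})" by (rule sturm_solutionD(2)[OF sol])
next
  fix u assume "u \<in> {a..b}"
  then show "0 \<le> q u * y u" using q_nonneg nonneg ab by simp
qed

(* Since y' is then nondecreasing, y lies between the chords t y'(0) and t y'(t). *)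
lemma left_chord_bounds:
  assumes nonneg: "\<And>t. t \<in> {0..x} \<Longrightarrow> 0 \<le> y t" and t: "t \<in> {0..x}"
  shows "t * g 0 \<le> y t" and "y t \<le> t * g t"
proof -
  have "y 0 - 0 * g 0 \<le> y t - t * g 0"
  proof (rule nondecreasing_by_deriv[of 0 t "{0..x}"])
    show "0 \<le> t" "{0..t} \<subseteq> {0..x}" using t by auto
    fix u assume "u \<in> {0..x}"
    then show "((\<lambda>u. y u - u * g 0) has_real_derivative g u - 1 * g 0) (at u within {0..x})"
      by (intro DERIV_diff DERIV_cmult_right DERIV_ident sturm_solutionD(1)[OF sol])
  next
    fix u assume "u \<in> {0..t}"
    then show "0 \<le> g u - 1 * g 0" using left_slope_mono[OF nonneg, of 0 u] t by auto
  qed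
  then show "t * g 0 \<le> y t" using y0 by simp
  have "0 * g t - y 0 \<le> t * g t - y t"
  proof (rule nondecreasing_by_deriv[of 0 t "{0..x}"])
    show "0 \<le> t" "{0..t} \<subseteq> {0..x}" using t by auto
    fix u assume "u \<in> {0..x}"
    then show "((\<lambda>u. u * g t - y u) has_real_derivative 1 * g t - g u) (at u within {0..x})"
      by (intro DERIV_diff DERIV_cmult_right DERIV_ident sturm_solutionD(1)[OF sol])
  next
    fix u assume "u \<in> {0..t}"
    then show "0 \<le> 1 * g t - g u" using left_slope_mono[OF nonneg, of u t] t by auto
  qed
  then show "y t \<le> t * g t" using y0 by simp
qed

end

(* A solution on [x,1] with q >= 0 and the Neumann condition y'(1) = 0: y y' <= 0,
  so |y| decreases. *)
context
  fixes q y g :: "real \<Rightarrow> real" and x :: real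
  assumes sol: "sturm_solution q {x..1} y g"
    and q_nonneg: "\<And>t. t \<in> {x..1} \<Longrightarrow> 0 \<le> q t"
    and neumann: "g 1 = 0"
begin

lemma right_energy_nonpos:
  assumes t: "t \<in> {x..1}"
  shows "y t * g t \<le> 0"
proof -
  have "y t * g t \<le> y 1 * g 1"
  proof (rule nondecreasing_by_deriv[of t 1 "{x..1}"])
    show "t \<le> 1" "{t..1} \<subseteq> {x..1}" using t by auto
    fix u assume "u \<in> {x..1}"
    then show "((\<lambda>u. y u * g u) has_real_derivative g u * g u + q u * y u * y u) (at u within {x..1})"
      using DERIV_mult[OF sturm_solutionD[OF sol]] by simp
  next
    fix u assume "u \<in> {t..1}"
    then show "0 \<le> g u * g u + q u * y u * y u" using q_nonneg t by (simp add: mult.assoc)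
  qed
  then show ?thesis using neumann by simp
qed

lemma right_le_pole_value:
  assumes yx: "0 \<le> y x" and t: "t \<in> {x..1}"
  shows "y t \<le> y x"
proof -
  have "- (y x * y x) \<le> - (y t * y t)"
  proof (rule nondecreasing_by_deriv[of x t "{x..1}"])
    show "x \<le> t" "{x..t} \<subseteq> {x..1}" using t by auto
    fix u assume "u \<in> {x..1}"
    then show "((\<lambda>u. - (y u * y u)) has_real_derivative - (g u * y u + g u * y u)) (at u within {x..1})"
      using DERIV_minus[OF DERIV_mult[OF sturm_solutionD(1)[OF sol] sturm_solutionD(1)[OF sol]]] by simp
  next
    fix u assume "u \<in> {x..t}"
    then show "0 \<le> - (g u * y u + g u * y u)"
      using right_energy_nonpos[of u] t by (simp add: mult.commute)
  qed
  then have "(y t)\<^sup>2 \<le> (y x)\<^sup>2" by (simp add: power2_eq_square)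
  then show ?thesis using yx by (rule power2_le_imp_le)
qed

end

definition green_column ::
    "(real \<Rightarrow> real) \<Rightarrow> real \<Rightarrow> (real \<Rightarrow> real) \<Rightarrow> (real \<Rightarrow> real) \<Rightarrow> (real \<Rightarrow> real) \<Rightarrow> bool" where
  "green_column q x y g1 g2 \<longleftrightarrow>
     y 0 = 0 \<and> sturm_solution q {0..x} y g1 \<and> sturm_solution q {x..1} y g2 \<and>
     g2 1 = 0 \<and> g1 x - g2 x = 1"

lemma cont_green_column:
  assumes "cont_green q G" "x \<in> {0<..1}"
  obtains g1 g2 where "green_column q x (\<lambda>t. G t x) g1 g2"
  using assms unfolding cont_green_def green_column_def sturm_solution_def by blast

context
  fixes q y g1 g2 :: "real \<Rightarrow> real" and x :: real
  assumes col: "green_column q x y g1 g2"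
    and x: "0 < x" "x \<le> 1"
    and q_nonneg: "\<And>t. t \<in> {0..1} \<Longrightarrow> 0 \<le> q t"
begin

lemma column_parts:
  "y 0 = 0" "sturm_solution q {0..x} y g1" "sturm_solution q {x..1} y g2" "g2 1 = 0" "g1 x - g2 x = 1"
  using col unfolding green_column_def by auto

lemma column_left_q: "t \<in> {0..x} \<Longrightarrow> 0 \<le> q t" and column_right_q: "t \<in> {x..1} \<Longrightarrow> 0 \<le> q t"
  using q_nonneg x by auto

(* The jump condition forces y(x) >= 0. *)
lemma column_pole_nonneg: "0 \<le> y x"
proof -
  have "y x = y x * g1 x - y x * g2 x" using column_parts(5) by (simp flip: right_diff_distrib)
  moreover have "0 \<le> y x * g1 x"
    using left_energy_nonneg[OF column_parts(2) column_left_q column_parts(1)] x by simp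
  moreover have "y x * g2 x \<le> 0"
    using right_energy_nonpos[OF column_parts(3) column_right_q column_parts(4)] x by simp
  ultimately show ?thesis by linarith
qed

lemma column_left_nonneg: "t \<in> {0..x} \<Longrightarrow> 0 \<le> y t"
  using left_nonneg[OF column_parts(2) column_left_q column_parts(1) column_pole_nonneg] .

lemma column_left_chords:
  assumes "t \<in> {0..x}"
  shows "t * g1 0 \<le> y t" and "y t \<le> t * g1 t"
  using left_chord_bounds[OF column_parts(2) column_left_q column_parts(1) column_left_nonneg assms]
  by auto

lemma column_slope_nonneg: "0 \<le> g1 x"
proof -
  have "0 \<le> x * g1 x" using column_pole_nonneg column_left_chords(2)[of x] x by force
  then show ?thesis using x by (simp add: zero_le_mult_iff)
qed

lemma column_right_bound:
  assumes u: "u \<in> {x..1}"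
  shows "y u \<le> u * g1 x"
proof -
  have "y u \<le> y x"
    using right_le_pole_value[OF column_parts(3) column_right_q column_parts(4) column_pole_nonneg u] .
  also have "\<dots> \<le> x * g1 x" using column_left_chords(2)[of x] x by simp
  also have "\<dots> \<le> u * g1 x" using u column_slope_nonneg by (intro mult_right_mono) auto
  finally show ?thesis .
qed

(* Psi is a primitive of t q(t) vanishing at 0, so Psi(1) is the quantity rho of the statement. *)
context
  fixes \<Psi> :: "real \<Rightarrow> real"
  assumes \<Psi>_deriv: "\<And>t. t \<in> {0..1} \<Longrightarrow> (\<Psi> has_real_derivative t * q t) (at t within {0..1})"
    and \<Psi>0: "\<Psi> 0 = 0"
begin

(* Integrating y'' = q y over [x,1] with y(t) <= t y'(x-): -y'(x+) <= y'(x-) (Psi(1) - Psi(x)). *)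
lemma column_neumann_estimate: "- g2 x \<le> g1 x * (\<Psi> 1 - \<Psi> x)"
proof -
  have "g1 x * \<Psi> x - g2 x \<le> g1 x * \<Psi> 1 - g2 1"
  proof (rule nondecreasing_by_deriv[of x 1 "{x..1}"])
    show "x \<le> 1" "{x..1} \<subseteq> {x..1}" using x by auto
    fix u assume u: "u \<in> {x..1}"
    then have "(\<Psi> has_real_derivative u * q u) (at u within {x..1})"
      using DERIV_subset[OF \<Psi>_deriv, of u "{x..1}"] x by auto
    then show "((\<lambda>u. g1 x * \<Psi> u - g2 u) has_real_derivative g1 x * (u * q u) - q u * y u) (at u within {x..1})"
      using u by (intro DERIV_diff DERIV_cmult sturm_solutionD(2)[OF column_parts(3)])
  next
    fix u assume u: "u \<in> {x..1}"
    then have "q u * y u \<le> q u * (u * g1 x)"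
      using column_right_bound column_right_q by (intro mult_left_mono) auto
    then show "0 \<le> g1 x * (u * q u) - q u * y u" by (simp add: algebra_simps)
  qed
  then show ?thesis using column_parts(4) by (simp add: algebra_simps)
qed

(* Gronwall on [0,x], using y'' = q y <= t q y': y'(x-) <= y'(0) e^(Psi(x)). *)
lemma column_gronwall: "g1 x \<le> g1 0 * exp (\<Psi> x)"
proof -
  have "- (g1 0 * exp (- \<Psi> 0)) \<le> - (g1 x * exp (- \<Psi> x))"
  proof (rule nondecreasing_by_deriv[of 0 x "{0..x}"])
    show "0 \<le> x" "{0..x} \<subseteq> {0..x}" using x by auto
    fix u assume u: "u \<in> {0..x}"
    then have "(\<Psi> has_real_derivative u * q u) (at u within {0..x})"
      using DERIV_subset[OF \<Psi>_deriv, of u "{0..x}"] x by auto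
    then have "((\<lambda>u. exp (- \<Psi> u)) has_real_derivative exp (- \<Psi> u) * (- (u * q u))) (at u within {0..x})"
      by (intro DERIV_chain2[OF DERIV_exp] DERIV_minus)
    then show "((\<lambda>u. - (g1 u * exp (- \<Psi> u))) has_real_derivative
             - (q u * y u * exp (- \<Psi> u) + exp (- \<Psi> u) * (- (u * q u)) * g1 u)) (at u within {0..x})"
      using u by (intro DERIV_minus DERIV_mult sturm_solutionD(2)[OF column_parts(2)])
  next
    fix u assume u: "u \<in> {0..x}"
    then have "q u * y u \<le> q u * (u * g1 u)"
      using column_left_chords(2) column_left_q by (intro mult_left_mono) auto
    then have "0 \<le> (q u * (u * g1 u) - q u * y u) * exp (- \<Psi> u)" by simp
    then show "0 \<le> - (q u * y u * exp (- \<Psi> u) + exp (- \<Psi> u) * (- (u * q u)) * g1 u)"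
      by (simp add: algebra_simps)
  qed
  then have decay: "g1 x * exp (- \<Psi> x) \<le> g1 0" using \<Psi>0 by simp
  have "g1 x = g1 x * exp (- \<Psi> x) * exp (\<Psi> x)" by (simp add: exp_minus)
  also have "\<dots> \<le> g1 0 * exp (\<Psi> x)" using decay by (intro mult_right_mono) auto
  finally show ?thesis .
qed

(* Combining with the jump y'(x-) - y'(x+) = 1 gives y'(0) >= e^(-rho)/(1+rho), and y(s) >= s y'(0). *)
lemma column_lower_bound:
  assumes s: "0 < s" "s \<le> x"
  shows "exp (- \<Psi> 1) / (1 + \<Psi> 1) \<le> y s / (s * x)"
proof -
  have \<Psi>_mono: "\<Psi> a \<le> \<Psi> b" if "0 \<le> a" "a \<le> b" "b \<le> 1" for a b
    using that by (intro nondecreasing_by_deriv[OF _ _ \<Psi>_deriv]) (auto intro!: mult_nonneg_nonneg q_nonneg)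
  have \<Psi>x: "0 \<le> \<Psi> x" "\<Psi> x \<le> \<Psi> 1" using \<Psi>_mono[of 0 x] \<Psi>_mono[of x 1] \<Psi>0 x by auto
  have g0: "0 \<le> g1 0"
    using column_gronwall column_slope_nonneg by (smt (verit) exp_gt_zero mult_neg_pos)
  have "0 \<le> g1 x * \<Psi> x" using column_slope_nonneg \<Psi>x by simp
  then have "- g2 x \<le> g1 x * \<Psi> 1"
    using column_neumann_estimate by (simp add: right_diff_distrib)
  have "1 = g1 x - g2 x" using column_parts(5) by simp
  also have "\<dots> \<le> g1 x * (1 + \<Psi> 1)"
    using \<open>- g2 x \<le> g1 x * \<Psi> 1\<close> by (simp add: algebra_simps)
  also have "\<dots> \<le> g1 0 * exp (\<Psi> 1) * (1 + \<Psi> 1)"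
  proof (rule mult_right_mono)
    have "g1 0 * exp (\<Psi> x) \<le> g1 0 * exp (\<Psi> 1)" using g0 \<Psi>x by (intro mult_left_mono) auto
    then show "g1 x \<le> g1 0 * exp (\<Psi> 1)" using column_gronwall by linarith
  qed (use \<Psi>x in simp)
  finally have bound: "1 \<le> g1 0 * (exp (\<Psi> 1) * (1 + \<Psi> 1))" by (simp only: mult.assoc)
  have "exp (- \<Psi> 1) / (1 + \<Psi> 1) = 1 / (exp (\<Psi> 1) * (1 + \<Psi> 1))"
    by (simp add: exp_minus divide_inverse)
  also have "\<dots> \<le> g1 0"
    using bound \<Psi>x by (simp add: divide_le_eq mult.commute add_nonneg_pos)
  also have "\<dots> \<le> g1 0 / x" using g0 x by (simp add: le_divide_eq mult_left_le)
  also have "\<dots> = s * g1 0 / (s * x)" using s by simp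
  also have "\<dots> \<le> y s / (s * x)" using column_left_chords(1)[of s] s x by (intro divide_right_mono) auto
  finally show ?thesis .
qed

end

end

(* Symmetry G(s,x) = G(x,s), from constancy of Wronskians on [0,s], [s,x] and [x,1]. *)
lemma green_column_symmetric:
  assumes sx: "0 < s" "s < x" "x \<le> 1"
    and col_x: "green_column q x y g1 g2" and col_s: "green_column q s z h1 h2"
  shows "y s = z x"
proof -
  note y = col_x[unfolded green_column_def] and z = col_s[unfolded green_column_def]
  have W1: "g1 0 * z 0 - y 0 * h1 0 = g1 s * z s - y s * h1 s"
    using sx y z by (intro wronskian_const) (auto elim: sturm_solution_subset)
  have W2: "g1 s * z s - y s * h2 s = g1 x * z x - y x * h2 x"
    using sx y z by (intro wronskian_const) (auto elim: sturm_solution_subset)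
  have W3: "g2 x * z x - y x * h2 x = g2 1 * z 1 - y 1 * h2 1"
    using sx y z by (intro wronskian_const) (auto elim: sturm_solution_subset)
  have "y s = y s * (h1 s - h2 s)" using z by simp
  also have "\<dots> = g1 s * z s - y s * h2 s" using W1 y z by (simp add: algebra_simps)
  also have "\<dots> = (g1 x - g2 x) * z x + (g2 x * z x - y x * h2 x)" using W2 by (simp add: algebra_simps)
  also have "\<dots> = z x" using W3 y z by simp
  finally show ?thesis .
qed

theorem continuous_green_lower_bound:
  fixes q :: "real \<Rightarrow> real" and G :: "real \<Rightarrow> real \<Rightarrow> real"
  assumes q_cont: "continuous_on {0..1} q" and q_nonneg: "\<And>t. t \<in> {0..1} \<Longrightarrow> 0 \<le> q t"
    and green: "cont_green q G" and s: "s \<in> {0<..1}" and x: "x \<in> {0<..1}"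
  defines "\<rho> \<equiv> integral {0..1} (\<lambda>t. t * q t)"
  shows "exp (- \<rho>) / (1 + \<rho>) \<le> G s x / (s * x)"
proof -
  define \<Psi> where "\<Psi> u = integral {0..u} (\<lambda>t. t * q t)" for u
  have "continuous_on {0..1} (\<lambda>t. t * q t)" by (intro continuous_intros q_cont)
  then have \<Psi>_deriv: "\<And>t. t \<in> {0..1} \<Longrightarrow> (\<Psi> has_real_derivative t * q t) (at t within {0..1})"
    unfolding \<Psi>_def has_real_derivative_iff_has_vector_derivative
    using integral_has_vector_derivative by blast
  have \<Psi>0: "\<Psi> 0 = 0" and \<Psi>1: "\<Psi> 1 = \<rho>" unfolding \<Psi>_def \<rho>_def by simp_all
  have column_bound: "exp (- \<rho>) / (1 + \<rho>) \<le> G a b / (a * b)" if "0 < a" "a \<le> b" "b \<le> 1" for a b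
  proof -
    have "b \<in> {0<..1}" using that by auto
    then obtain g1 g2 where "green_column q b (\<lambda>t. G t b) g1 g2"
      using cont_green_column[OF green] by blast
    from column_lower_bound[OF this _ _ q_nonneg \<Psi>_deriv \<Psi>0 that(1,2)] that
    show ?thesis unfolding \<Psi>1 by simp
  qed
  show ?thesis
  proof (cases "s \<le> x")
    case True
    then show ?thesis using column_bound s x by auto
  next
    case False
    obtain g1 g2 where col_s: "green_column q s (\<lambda>t. G t s) g1 g2"
      using cont_green_column[OF green s] .
    obtain h1 h2 where col_x: "green_column q x (\<lambda>t. G t x) h1 h2"
      using cont_green_column[OF green x] .
    have "G x s = G s x"
      using green_column_symmetric[OF _ _ _ col_s col_x] False s x by auto
    then show ?thesis using column_bound[of x s] False s x by (simp add: mult.commute)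
  qed
qed

lemma smooth_on_set_continuous:
  assumes "smooth_on_set S f"
  shows "continuous_on S f"
proof -
  obtain D where "D 0 = f" "\<forall>k. \<forall>s\<in>S. (D k has_vector_derivative D (Suc k) s) (at s within S)"
    using assms unfolding smooth_on_set_def by blast
  then show ?thesis using continuous_on_vector_derivative[of S "D 0" "D (Suc 0)"] by auto
qed

theorem proposition3p4:
  shows "(\<forall>(n::nat) (\<eta>::nat \<Rightarrow> 'a::euclidean_space) (\<upsilon>::real).
            \<eta> (n + 1) = 0 \<longrightarrow>
            (\<forall>k\<in>{1..n}. norm (grad_plus n \<eta> k) = 1) \<longrightarrow>
            0 < \<upsilon> \<longrightarrow> \<upsilon> \<le> 2 * sqrt (real n) / 5 \<longrightarrow>
            (\<forall>k\<in>{1..n-1}. real k powr (3/2) / real n powr (3/2)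
                 * (norm (grad_plus n (grad_plus n \<eta>) k))\<^sup>2 \<le> \<upsilon>) \<longrightarrow>
            (\<forall>j\<in>{1..n}. \<forall>k\<in>{1..n}.
                 (real n)\<^sup>2 * disc_green (alpha_seq n \<eta>) n k j / (real j * real k) \<ge> exp (- 2 * \<upsilon>)))
       \<and>
       (\<forall>(\<eta>::real \<Rightarrow> 'b::euclidean_space) \<eta>s \<eta>ss (G::real \<Rightarrow> real \<Rightarrow> real).
            (\<forall>s\<in>{0..1}. (\<eta> has_vector_derivative \<eta>s s) (at s within {0..1})) \<longrightarrow>
            (\<forall>s\<in>{0..1}. (\<eta>s has_vector_derivative \<eta>ss s) (at s within {0..1})) \<longrightarrow>
            smooth_on_set {0..1} \<eta>ss \<longrightarrow>
            cont_green (\<lambda>s. (norm (\<eta>ss s))\<^sup>2) G \<longrightarrow>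
            (let \<rho> = integral {0..1} (\<lambda>s. s * (norm (\<eta>ss s))\<^sup>2) in
             \<forall>s\<in>{0<..1}. \<forall>x\<in>{0<..1}. G s x / (s * x) \<ge> exp (- \<rho>) / (1 + \<rho>)))"
proof (intro conjI allI impI ballI)
  fix n :: nat and \<eta> :: "nat \<Rightarrow> 'a" and \<upsilon> :: real and j k :: nat
  assume "\<eta> (n + 1) = 0" and unit: "\<forall>k\<in>{1..n}. norm (grad_plus n \<eta> k) = 1"
    and "0 < \<upsilon>" "\<upsilon> \<le> 2 * sqrt (real n) / 5"
    and curv: "\<forall>k\<in>{1..n-1}. real k powr (3/2) / real n powr (3/2)
                 * (norm (grad_plus n (grad_plus n \<eta>) k))\<^sup>2 \<le> \<upsilon>"
    and "j \<in> {1..n}" "k \<in> {1..n}"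
  then show "exp (- 2 * \<upsilon>) \<le> (real n)\<^sup>2 * disc_green (alpha_seq n \<eta>) n k j / (real j * real k)"
    by (intro discrete_green_lower_bound[OF unit _ _ curv]) auto
next
  fix \<eta> \<eta>s \<eta>ss :: "real \<Rightarrow> 'b" and G :: "real \<Rightarrow> real \<Rightarrow> real"
  assume "\<forall>s\<in>{0..1}. (\<eta> has_vector_derivative \<eta>s s) (at s within {0..1})"
    and "\<forall>s\<in>{0..1}. (\<eta>s has_vector_derivative \<eta>ss s) (at s within {0..1})"
    and smooth: "smooth_on_set {0..1} \<eta>ss" and green: "cont_green (\<lambda>s. (norm (\<eta>ss s))\<^sup>2) G"
  have "continuous_on {0..1} (\<lambda>s. (norm (\<eta>ss s))\<^sup>2)"
    using smooth_on_set_continuous[OF smooth] by (intro continuous_intros)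
  from continuous_green_lower_bound[OF this _ green]
  show "let \<rho> = integral {0..1} (\<lambda>s. s * (norm (\<eta>ss s))\<^sup>2) in
          \<forall>s\<in>{0<..1}. \<forall>x\<in>{0<..1}. exp (- \<rho>) / (1 + \<rho>) \<le> G s x / (s * x)"
    unfolding Let_def by auto
qed

end
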